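(* Let $f,g,\phi,c,\eta,w,\alpha,x_0,G,\Psi$ satisfy the following: $f,g\in C(\mathbb{R}_0^+\times\mathbb{R}_0^+,\mathbb{R}_0^+)$ are nondecreasing in the first variable for each fixed second variable; $\phi\in C(\mathbb{R}_0^+,\mathbb{R}_0^+)$ is strictly increasing with $\lim_{x\to\infty}\phi(x)=\infty$; $c\in C(\mathbb{R}_0^+,\mathbb{R}^+)$ is nondecreasing; $\eta,w\in C(\mathbb{R}_0^+,\mathbb{R}_0^+)$ are nondecreasing and positive on $(0,\infty)$; $\alpha\in C^1(\mathbb{R}_0^+,\mathbb{R}_0^+)$ is nondecreasing with $\alpha(t)\le t$; and $x_0,G,\Psi$ are as in the context. Suppose $u\in C(\mathbb{R}_0^+,\mathbb{R}_0^+)$ satisfies, for all $t\ge0$, $$\phi(u(t))\le c(t)+\int_0^{\alpha(t)}f(t,s)\,\eta(u(s))\,w(u(s))\,ds+\int_0^{t}g(t,s)\,\eta(u(s))\,w(u(s))\,ds.$$ Let $\tau>0$ be such that for all $t\in[0,\tau]$, $$\Psi(G(c(t)))+\int_0^{\alpha(t)}f(t,s)\,ds+\int_0^{t}g(t,s)\,ds\in\mathrm{Dom}(\Psi^{-1}).$$ Then for all $t\in[0,\tau]$, $$u(t)\le\phi^{-1}\Big\{G^{-1}\Big(\Psi^{-1}\Big[\Psi(G(c(t)))+\int_0^{\alpha(t)}f(t,s)\,ds+\int_0^{t}g(t,s)\,ds\Big]\Big)\Big\}.$$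
   Context: $\mathbb{R}_0^+=[0,\infty)$, $\mathbb{R}^+=(0,\infty)$. $\phi^{-1}$ denotes the inverse of $\phi$, defined on $[\phi(0),\infty)$. The constant $x_0$ is a real number with $\phi(0)\le x_0<c(0)$ such that $\int_{x_0}^x\frac{ds}{\eta(\phi^{-1}(s))}<\infty$ for every $x\ge x_0$ and $\int_{x_0}^\infty\frac{ds}{\eta(\phi^{-1}(s))}=\infty$ (in the paper: $x_0>0$ may be required when $\int_0^x\frac{ds}{\eta(\phi^{-1}(s))}=\infty$, and $x_0\ge0$ is allowed when this integral is finite). Define $G:[x_0,\infty)\to[0,\infty)$ by $G(x)=\int_{x_0}^x\frac{ds}{\eta(\phi^{-1}(s))}$; it is a strictly increasing bijection with inverse $G^{-1}$. Fix $x_1>0$ and define, for $x>0$, $\Psi(x)=\int_{x_1}^x\frac{ds}{w(\phi^{-1}(G^{-1}(s)))}$; $\Psi$ is strictly increasing on $(0,\infty)$, $\Psi^{-1}$ is its inverse and $\mathrm{Dom}(\Psi^{-1})=\Psi((0,\infty))$. *)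

theory Defs
  imports "HOL-Analysis.Analysis"
begin

definition phi_inv :: "(real \<Rightarrow> real) \<Rightarrow> real \<Rightarrow> real" where
  "phi_inv phi = the_inv_into {0..} phi"

text \<open>G(x) = int_{x0}^x ds / eta(phi^{-1}(s)) (Lebesgue integral; improper at x0 allowed).\<close>
definition G_fun :: "(real \<Rightarrow> real) \<Rightarrow> (real \<Rightarrow> real) \<Rightarrow> real \<Rightarrow> real \<Rightarrow> real" where
  "G_fun phi eta x0 x = (LBINT s=x0..x. 1 / eta (phi_inv phi s))"

definition G_inv :: "(real \<Rightarrow> real) \<Rightarrow> (real \<Rightarrow> real) \<Rightarrow> real \<Rightarrow> real \<Rightarrow> real" where
  "G_inv phi eta x0 = the_inv_into {x0..} (G_fun phi eta x0)"

text \<open>Psi(x) = int_{x1}^x ds / w(phi^{-1}(G^{-1}(s))), signed (oriented) integral, for x > 0.\<close>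
definition Psi_fun :: "(real \<Rightarrow> real) \<Rightarrow> (real \<Rightarrow> real) \<Rightarrow> (real \<Rightarrow> real) \<Rightarrow> real \<Rightarrow> real \<Rightarrow> real \<Rightarrow> real" where
  "Psi_fun phi eta w x0 x1 x = (LBINT s=x1..x. 1 / w (phi_inv phi (G_inv phi eta x0 s)))"

definition Psi_inv :: "(real \<Rightarrow> real) \<Rightarrow> (real \<Rightarrow> real) \<Rightarrow> (real \<Rightarrow> real) \<Rightarrow> real \<Rightarrow> real \<Rightarrow> real \<Rightarrow> real" where
  "Psi_inv phi eta w x0 x1 = the_inv_into {0<..} (Psi_fun phi eta w x0 x1)"

end

theory Submission
  imports Defs
begin

(* Fix an endpoint T in [0, tau].  Freezing the first argument of the kernels at T turns the
   right-hand side of the inequality, evaluated at t <= T, into a nondecreasing majorant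
     v(t) = c(T) + int_0^{alpha t} f(T,s) eta(u s) w(u s) ds + int_0^t g(T,s) eta(u s) w(u s) ds
   with phi(u t) <= v(t).  Writing p = phi^{-1}(v t), monotonicity of eta and w gives
   v'(t) <= F'(t) eta(p) w(p), where F(t) = int_0^{alpha t} f(T,s) ds + int_0^t g(T,s) ds,
   and (Psi o G)'(x) = 1 / (eta(phi^{-1} x) w(phi^{-1} x)).  Hence Psi(G(v T)) <= Psi(G(c T)) + F(T),
   and inverting Psi, G and phi (all strictly increasing) yields the bound on u(T). *)

lemma continuous_on_halfline:
  fixes h :: "real \<Rightarrow> 'b::topological_space"
  assumes "\<And>b. continuous_on {a..b} h"
  shows "continuous_on {a..} h"
  unfolding continuous_on_eq_continuous_within
proof
  fix x assume "x \<in> {a..}"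
  then have "continuous (at x within {a..x+1}) h"
    using assms[of "x+1"] by (simp add: continuous_on_eq_continuous_within)
  moreover have "at x within {a..} = at x within {a..x+1}"
    by (rule at_within_nhd[of _ "{..<x+1}"]) auto
  ultimately show "continuous (at x within {a..}) h" by simp
qed

locale halfline_bijection =
  fixes h :: "real \<Rightarrow> real" and a :: real
  assumes cont: "continuous_on {a..} h"
    and strict: "strict_mono_on {a..} h"
    and unbounded: "filterlim h at_top at_top"
begin

definition hinv :: "real \<Rightarrow> real" where
  "hinv = the_inv_into {a..} h"

lemma inj: "inj_on h {a..}"
  using strict strict_mono_on_imp_inj_on by blast

lemma mono_le: "a \<le> x \<Longrightarrow> x \<le> y \<Longrightarrow> h x \<le> h y"
  using strict by (auto intro: strict_mono_on_leD)

lemma image_segment: "h a \<le> y \<Longrightarrow> y \<le> h M \<Longrightarrow> a \<le> M \<Longrightarrow> y \<in> h ` {a..M}"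
  using IVT'[of h a y M] continuous_on_subset[OF cont, of "{a..M}"] by force

lemma exceeds: obtains M where "a \<le> M" "y \<le> h M"
proof -
  have "eventually (\<lambda>x. y \<le> h x) at_top" using unbounded by (simp add: filterlim_at_top)
  then obtain N where "\<forall>x\<ge>N. y \<le> h x" by (auto simp: eventually_at_top_linorder)
  then show ?thesis using that[of "max a N"] by auto
qed

lemma image: "h ` {a..} = {h a..}"
proof
  show "h ` {a..} \<subseteq> {h a..}" using mono_le by auto
  show "{h a..} \<subseteq> h ` {a..}"
  proof
    fix y assume "y \<in> {h a..}"
    obtain M where "a \<le> M" "y \<le> h M" using exceeds .
    then show "y \<in> h ` {a..}" using image_segment[of y M] \<open>y \<in> {h a..}\<close> by auto
  qed
qed

lemma hinv_in: "h a \<le> y \<Longrightarrow> a \<le> hinv y"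
  using the_inv_into_into[OF inj, of y "{a..}"] image by (auto simp: hinv_def)

lemma h_hinv: "h a \<le> y \<Longrightarrow> h (hinv y) = y"
  using f_the_inv_into_f[OF inj, of y] image by (auto simp: hinv_def)

lemma hinv_h: "a \<le> x \<Longrightarrow> hinv (h x) = x"
  using the_inv_into_f_f[OF inj] by (auto simp: hinv_def)

lemma hinv_gt: "h a < y \<Longrightarrow> a < hinv y"
proof -
  assume "h a < y"
  then have "a \<le> hinv y" "h (hinv y) = y" using hinv_in h_hinv by auto
  then show ?thesis using \<open>h a < y\<close> by (cases "hinv y = a") auto
qed

lemma hinv_mono:
  assumes "h a \<le> y1" "y1 \<le> y2"
  shows "hinv y1 \<le> hinv y2"
proof (rule ccontr)
  assume "\<not> hinv y1 \<le> hinv y2"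
  then have "h (hinv y2) < h (hinv y1)"
    using assms hinv_in[of y2] by (intro strict_mono_onD[OF strict]) auto
  then show False using assms h_hinv[of y1] h_hinv[of y2] by auto
qed

lemma le_hinv: "a \<le> x \<Longrightarrow> h x \<le> y \<Longrightarrow> x \<le> hinv y"
  using hinv_mono[of "h x" y] hinv_h mono_le by fastforce

lemma hinv_cont: "continuous_on {h a..} hinv"
proof (rule continuous_on_halfline)
  fix b
  obtain M where M: "a \<le> M" "b \<le> h M" using exceeds .
  have "continuous_on (h ` {a..M}) hinv"
    by (rule continuous_on_inv) (auto intro: continuous_on_subset[OF cont] hinv_h)
  moreover have "{h a..b} \<subseteq> h ` {a..M}" using image_segment M by auto
  ultimately show "continuous_on {h a..b} hinv" using continuous_on_subset by blast
qed

end

lemma continuous_on_section: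
  assumes "continuous_on (A \<times> B) (\<lambda>(t, s). f t s)" "t \<in> A"
  shows "continuous_on B (f t)"
proof -
  have "continuous_on B (\<lambda>s. (\<lambda>(t, s). f t s) (t, s))"
    by (rule continuous_on_compose2[OF assms(1) continuous_on_Pair[OF continuous_on_const continuous_on_id]])
       (use assms(2) in auto)
  then show ?thesis by simp
qed

lemma integral_from_continuous:
  fixes k :: "real \<Rightarrow> real"
  assumes "continuous_on {a..} k"
  shows "continuous_on {a..} (\<lambda>y. integral {a..y} k)"
proof (rule continuous_on_halfline)
  fix b
  have "k integrable_on {a..b}"
    by (rule integrable_continuous_interval, rule continuous_on_subset[OF assms]) auto
  then show "continuous_on {a..b} (\<lambda>y. integral {a..y} k)"
    by (rule indefinite_integral_continuous_1)
qed

lemma integral_from_mono: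
  fixes k :: "real \<Rightarrow> real"
  assumes "continuous_on {a..} k" "\<And>s. a \<le> s \<Longrightarrow> 0 \<le> k s" "x \<le> y"
  shows "integral {a..x} k \<le> integral {a..y} k"
  by (rule integral_subset_le[OF _ integrable_continuous_interval integrable_continuous_interval])
     (use assms in \<open>auto intro: continuous_on_subset\<close>)

lemma integral_from_comp_deriv:
  fixes k \<beta> :: "real \<Rightarrow> real"
  assumes k: "continuous_on {a..} k"
    and S: "open S" "t \<in> S" "\<beta> ` S \<subseteq> {a..}"
    and \<beta>: "(\<beta> has_real_derivative \<beta>') (at t)"
  shows "((\<lambda>x. integral {a..\<beta> x} k) has_real_derivative k (\<beta> t) * \<beta>') (at t)"
proof -
  let ?b = "\<beta> t"
  have "?b \<in> {a..}" using S by auto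
  then have "((\<lambda>y. integral {a..y} k) has_real_derivative k ?b) (at ?b within {a..?b+1})"
    by (intro integral_has_real_derivative) (use k in \<open>auto intro: continuous_on_subset\<close>)
  moreover have "at ?b within {a..} = at ?b within {a..?b+1}"
    by (rule at_within_nhd[of _ "{..<?b+1}"]) auto
  ultimately have "((\<lambda>y. integral {a..y} k) has_real_derivative k ?b) (at ?b within \<beta> ` S)"
    using DERIV_subset S(3) by metis
  from DERIV_image_chain[OF this has_field_derivative_at_within[OF \<beta>]]
  have "((\<lambda>x. integral {a..\<beta> x} k) has_real_derivative k ?b * \<beta>') (at t within S)"
    by (simp add: o_def)
  then show ?thesis using at_within_open[OF S(2,1)] by simp
qed

lemma integral_kernel_le:
  fixes K :: "real \<Rightarrow> real \<Rightarrow> real" and E :: "real \<Rightarrow> real"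
  assumes "continuous_on {a..} (K s)" "continuous_on {a..} (K t)" "continuous_on {a..} E"
    and "\<And>r. a \<le> r \<Longrightarrow> 0 \<le> E r" "\<And>r. a \<le> r \<Longrightarrow> K s r \<le> K t r"
  shows "integral {a..b} (\<lambda>r. K s r * E r) \<le> integral {a..b} (\<lambda>r. K t r * E r)"
proof (rule integral_le)
  have "continuous_on {a..b} (K s)" "continuous_on {a..b} (K t)" "continuous_on {a..b} E"
    using assms(1-3) by (auto intro: continuous_on_subset)
  then show "(\<lambda>r. K s r * E r) integrable_on {a..b}" "(\<lambda>r. K t r * E r) integrable_on {a..b}"
    by (auto intro!: integrable_continuous_interval continuous_on_mult)
  fix r assume "r \<in> {a..b}"
  then show "K s r * E r \<le> K t r * E r" using assms(4,5) by (auto intro: mult_right_mono)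
qed

(* Integrals from a, where the integrand need only be integrable near a (G may be improper at x0)
   but is continuous and positive beyond a. *)
lemma integral_halfline_continuous:
  fixes k :: "real \<Rightarrow> real"
  assumes "\<And>x. a \<le> x \<Longrightarrow> k integrable_on {a..x}"
  shows "continuous_on {a..} (\<lambda>y. integral {a..y} k)"
proof (rule continuous_on_halfline)
  fix b show "continuous_on {a..b} (\<lambda>y. integral {a..y} k)"
  proof (cases "a \<le> b")
    case True
    then show ?thesis by (rule indefinite_integral_continuous_1[OF assms])
  qed simp
qed

lemma integral_halfline_deriv:
  fixes k :: "real \<Rightarrow> real"
  assumes int: "\<And>x. a \<le> x \<Longrightarrow> k integrable_on {a..x}"
    and cont: "continuous_on {a<..} k" and "a < x"
  shows "((\<lambda>y. integral {a..y} k) has_real_derivative k x) (at x)"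
proof -
  define m where "m = (a + x) / 2"
  have m: "a < m" "m < x" using \<open>a < x\<close> by (auto simp: m_def)
  have split: "integral {a..y} k = integral {a..m} k + integral {m..y} k" if "m < y" for y
    using Henstock_Kurzweil_Integration.integral_combine[of a m y k] int[of y] m that by auto
  have "((\<lambda>y. integral {m..y} k) has_real_derivative k x) (at x within {m..x+1})"
    by (rule integral_has_real_derivative) (use m in \<open>auto intro: continuous_on_subset[OF cont]\<close>)
  then have "((\<lambda>y. integral {m..y} k) has_real_derivative k x) (at x within {m<..<x+1})"
    by (rule DERIV_subset) auto
  then have "((\<lambda>y. integral {m..y} k) has_real_derivative k x) (at x)"
    using at_within_open[of x "{m<..<x+1}"] m by auto
  then have "((\<lambda>y. integral {a..m} k + integral {m..y} k) has_real_derivative k x) (at x)"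
    by (auto intro!: derivative_eq_intros)
  then show ?thesis
    by (rule has_field_derivative_transform_within_open[of _ _ _ "{m<..}"]) (use m split in auto)
qed

lemma integral_halfline_strict_mono:
  fixes k :: "real \<Rightarrow> real"
  assumes int: "\<And>x. a \<le> x \<Longrightarrow> k integrable_on {a..x}"
    and cont: "continuous_on {a<..} k"
    and nonneg: "\<And>x. a \<le> x \<Longrightarrow> 0 \<le> k x" and pos: "\<And>x. a < x \<Longrightarrow> 0 < k x"
  shows "strict_mono_on {a..} (\<lambda>y. integral {a..y} k)"
proof (rule strict_mono_onI)
  fix x y assume "x \<in> {a..}" "y \<in> {a..}" "x < y"
  define m where "m = (x + y) / 2"
  have m: "x < m" "m < y" "a < m" using \<open>x < y\<close> \<open>x \<in> {a..}\<close> by (auto simp: m_def)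
  have "integral {a..x} k \<le> integral {a..m} k"
    by (rule integral_subset_le) (use m \<open>x \<in> {a..}\<close> int nonneg in auto)
  also have "\<dots> < integral {a..y} k"
  proof (rule DERIV_pos_imp_increasing[OF m(2)])
    fix z assume "m \<le> z" "z \<le> y"
    then show "\<exists>d. ((\<lambda>y. integral {a..y} k) has_real_derivative d) (at z) \<and> 0 < d"
      using integral_halfline_deriv[OF int cont, of z] pos[of z] m by auto
  qed
  finally show "integral {a..x} k < integral {a..y} k" .
qed

lemma interval_integral_has_derivative:
  fixes h :: "real \<Rightarrow> real"
  assumes cont: "continuous_on {a<..} h" and "a < x1" "a < y"
  shows "((\<lambda>x. LBINT s=x1..x. h s) has_real_derivative h y) (at y)"
proof -
  define lo hi where "lo = (a + min x1 y) / 2" and "hi = max x1 y + 1"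
  have bounds: "a < lo" "lo < y" "y < hi" "lo \<le> x1" "x1 \<le> hi"
    using assms by (auto simp: lo_def hi_def)
  have "((\<lambda>x. LBINT s=x1..x. h s) has_vector_derivative h y) (at y within {lo..hi})"
    by (rule interval_integral_FTC2) (use bounds in \<open>auto intro: continuous_on_subset[OF cont]\<close>)
  then have "((\<lambda>x. LBINT s=x1..x. h s) has_real_derivative h y) (at y within {lo..hi})"
    by (simp add: has_real_derivative_iff_has_vector_derivative)
  then have "((\<lambda>x. LBINT s=x1..x. h s) has_real_derivative h y) (at y within {lo<..<hi})"
    by (rule DERIV_subset) auto
  then show ?thesis using at_within_open[of y "{lo<..<hi}"] bounds by auto
qed

lemma antiderivative_comparison:
  fixes v F K H v' F' :: "real \<Rightarrow> real"
  assumes "a \<le> b"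
    and v_cont: "continuous_on {a..b} v" and F_cont: "continuous_on {a..b} F"
    and v_deriv: "\<And>t. a < t \<Longrightarrow> t < b \<Longrightarrow> (v has_real_derivative v' t) (at t)"
    and F_deriv: "\<And>t. a < t \<Longrightarrow> t < b \<Longrightarrow> (F has_real_derivative F' t) (at t)"
    and K_deriv: "\<And>t. a \<le> t \<Longrightarrow> t \<le> b \<Longrightarrow> (K has_real_derivative 1 / H (v t)) (at (v t))"
    and H_pos: "\<And>t. a < t \<Longrightarrow> t < b \<Longrightarrow> 0 < H (v t)"
    and growth: "\<And>t. a < t \<Longrightarrow> t < b \<Longrightarrow> v' t \<le> F' t * H (v t)"
  shows "K (v b) - K (v a) \<le> F b - F a"
proof -
  have "continuous_on (v ` {a..b}) K"
    using K_deriv DERIV_isCont by (intro continuous_at_imp_continuous_on) force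
  then have Kv_cont: "continuous_on {a..b} (\<lambda>t. K (v t))"
    using continuous_on_compose2[OF _ v_cont] by blast
  have "K (v b) - F b \<le> K (v a) - F a"
  proof (rule DERIV_nonpos_imp_decreasing_open[OF \<open>a \<le> b\<close>])
    show "continuous_on {a..b} (\<lambda>t. K (v t) - F t)"
      using Kv_cont F_cont by (rule continuous_on_diff)
    fix t assume t: "a < t" "t < b"
    have "((\<lambda>t. K (v t) - F t) has_real_derivative 1 / H (v t) * v' t - F' t) (at t)"
      using DERIV_diff[OF DERIV_chain2[OF K_deriv v_deriv] F_deriv] t by auto
    moreover have "1 / H (v t) * v' t \<le> F' t"
      using growth[OF t] H_pos[OF t] by (simp add: divide_le_eq)
    ultimately show "\<exists>y. ((\<lambda>t. K (v t) - F t) has_real_derivative y) (at t) \<and> y \<le> 0"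
      by auto
  qed
  then show ?thesis by simp
qed

locale bihari_scales =
  fixes phi eta w :: "real \<Rightarrow> real" and x0 x1 :: real
  assumes phi_cont: "continuous_on {0..} phi"
    and phi_strict: "strict_mono_on {0..} phi"
    and phi_lim: "filterlim phi at_top at_top"
    and eta_cont: "continuous_on {0..} eta"
    and eta_nonneg: "\<And>x. x \<ge> 0 \<Longrightarrow> eta x \<ge> 0"
    and eta_pos: "\<And>x. x > 0 \<Longrightarrow> eta x > 0"
    and w_cont: "continuous_on {0..} w"
    and w_pos: "\<And>x. x > 0 \<Longrightarrow> w x > 0"
    and x0_ge: "phi 0 \<le> x0"
    and G_finite: "\<And>x. x \<ge> x0 \<Longrightarrow> set_integrable lborel {x0..x} (\<lambda>s. 1 / eta (phi_inv phi s))"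
    and G_infinite: "filterlim (G_fun phi eta x0) at_top at_top"
    and x1_pos: "x1 > 0"
begin

abbreviation "pinv \<equiv> phi_inv phi"
abbreviation "G \<equiv> G_fun phi eta x0"
abbreviation "Ginv \<equiv> G_inv phi eta x0"
abbreviation "Psi \<equiv> Psi_fun phi eta w x0 x1"

sublocale phi: halfline_bijection phi 0
  by unfold_locales (rule phi_cont phi_strict phi_lim)+

lemma pinv_eq: "pinv = phi.hinv"
  by (simp add: phi_inv_def phi.hinv_def)

lemma pinv_pos: "x0 < x \<Longrightarrow> 0 < pinv x"
  using phi.hinv_gt x0_ge by (simp add: pinv_eq)

definition G_density :: "real \<Rightarrow> real" where
  "G_density s = 1 / eta (pinv s)"

lemma G_density_integrable:
  assumes "x0 \<le> x" shows "G_density integrable_on {x0..x}"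
  unfolding G_density_def[abs_def] using set_borel_integral_eq_integral(1)[OF G_finite[OF assms]] .

lemma G_eq_integral: "x0 \<le> x \<Longrightarrow> G x = integral {x0..x} G_density"
  unfolding G_fun_def G_density_def using interval_integral_eq_integral G_finite by blast

lemma G_density_cont: "continuous_on {x0<..} G_density"
proof -
  have "continuous_on {x0<..} pinv"
    using phi.hinv_cont x0_ge by (auto simp: pinv_eq intro: continuous_on_subset)
  moreover have "pinv ` {x0<..} \<subseteq> {0..}" using pinv_pos by force
  ultimately have "continuous_on {x0<..} (\<lambda>s. eta (pinv s))"
    using continuous_on_compose2[OF eta_cont] by blast
  moreover have "eta (pinv s) \<noteq> 0" if "s \<in> {x0<..}" for s
    using eta_pos[OF pinv_pos] that by force
  ultimately show ?thesis unfolding G_density_def by (intro continuous_intros) auto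
qed

lemma G_density_pos: "x0 < x \<Longrightarrow> 0 < G_density x"
  using eta_pos[OF pinv_pos] by (simp add: G_density_def)

lemma G_density_nonneg: "x0 \<le> x \<Longrightarrow> 0 \<le> G_density x"
  using eta_nonneg phi.hinv_in x0_ge by (simp add: G_density_def pinv_eq)

lemma G_deriv: "x0 < x \<Longrightarrow> (G has_real_derivative G_density x) (at x)"
  by (rule has_field_derivative_transform_within_open[of _ _ _ "{x0<..}"],
      rule integral_halfline_deriv[OF G_density_integrable G_density_cont])
     (auto simp: G_eq_integral)

lemma G_cont: "continuous_on {x0..} G"
  using integral_halfline_continuous[OF G_density_integrable]
  by (rule continuous_on_eq) (auto simp: G_eq_integral)

lemma G_strict: "strict_mono_on {x0..} G"
  using integral_halfline_strict_mono[OF G_density_integrable G_density_cont G_density_nonneg G_density_pos]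
  by (auto simp: strict_mono_on_def G_eq_integral)

lemma G_x0: "G x0 = 0"
  by (simp add: G_eq_integral)

sublocale G: halfline_bijection G x0
  by unfold_locales (rule G_cont G_strict G_infinite)+

lemma Ginv_eq: "Ginv = G.hinv"
  by (simp add: G_inv_def G.hinv_def)

definition Psi_density :: "real \<Rightarrow> real" where
  "Psi_density s = 1 / w (pinv (Ginv s))"

lemma pinv_Ginv_pos: "0 < y \<Longrightarrow> 0 < pinv (Ginv y)"
  using G.hinv_gt G_x0 pinv_pos by (simp add: Ginv_eq)

lemma Psi_density_cont: "continuous_on {0<..} Psi_density"
proof -
  have "continuous_on {0<..} Ginv"
    using G.hinv_cont G_x0 by (auto simp: Ginv_eq intro: continuous_on_subset)
  moreover have "Ginv ` {0<..} \<subseteq> {phi 0..}"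
    using G.hinv_gt G_x0 x0_ge by (force simp: Ginv_eq)
  ultimately have "continuous_on {0<..} (\<lambda>s. pinv (Ginv s))"
    using continuous_on_compose2[OF phi.hinv_cont] by (auto simp: pinv_eq)
  moreover have "(\<lambda>s. pinv (Ginv s)) ` {0<..} \<subseteq> {0..}"
    using pinv_Ginv_pos by force
  ultimately have "continuous_on {0<..} (\<lambda>s. w (pinv (Ginv s)))"
    using continuous_on_compose2[OF w_cont] by blast
  moreover have "w (pinv (Ginv s)) \<noteq> 0" if "s \<in> {0<..}" for s
    using w_pos[OF pinv_Ginv_pos] that by force
  ultimately show ?thesis unfolding Psi_density_def by (intro continuous_intros) auto
qed

lemma Psi_density_pos: "0 < y \<Longrightarrow> 0 < Psi_density y"
  using w_pos[OF pinv_Ginv_pos] by (simp add: Psi_density_def)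

lemma Psi_deriv: "0 < y \<Longrightarrow> (Psi has_real_derivative Psi_density y) (at y)"
  unfolding Psi_fun_def Psi_density_def[symmetric]
  using interval_integral_has_derivative[OF Psi_density_cont x1_pos] by simp

lemma Psi_strict: "strict_mono_on {0<..} Psi"
proof (rule strict_mono_onI)
  fix x y :: real assume "x \<in> {0<..}" "x < y"
  show "Psi x < Psi y"
  proof (rule DERIV_pos_imp_increasing[OF \<open>x < y\<close>])
    fix z assume "x \<le> z"
    then have "0 < z" using \<open>x \<in> {0<..}\<close> by simp
    then show "\<exists>d. (Psi has_real_derivative d) (at z) \<and> 0 < d"
      using Psi_deriv Psi_density_pos by blast
  qed
qed

lemma PsiG_deriv:
  assumes "x0 < x"
  shows "((\<lambda>x. Psi (G x)) has_real_derivative 1 / (eta (pinv x) * w (pinv x))) (at x)"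
proof -
  have "0 < G x" using strict_mono_onD[OF G_strict, of x0 x] G_x0 assms by simp
  moreover have "Psi_density (G x) = 1 / w (pinv x)"
    using G.hinv_h assms by (simp add: Psi_density_def Ginv_eq)
  ultimately show ?thesis
    using DERIV_chain2[OF Psi_deriv G_deriv[OF assms]] by (simp add: G_density_def mult.commute)
qed

lemma bound_by_inverses:
  assumes "0 \<le> y" "phi y \<le> x" "x0 < x" "Psi (G x) \<le> X" "X \<in> Psi ` {0<..}"
  shows "y \<le> pinv (Ginv (Psi_inv phi eta w x0 x1 X))"
proof -
  obtain z where z: "0 < z" "X = Psi z" using assms(5) by auto
  have "Psi_inv phi eta w x0 x1 X = z"
    unfolding Psi_inv_def z(2)
    using the_inv_into_f_f[OF strict_mono_on_imp_inj_on[OF Psi_strict]] z(1) by auto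
  moreover have "G x \<le> z"
  proof (rule ccontr)
    assume "\<not> G x \<le> z"
    then have "Psi z < Psi (G x)" using Psi_strict z(1) by (auto intro: strict_mono_onD)
    then show False using assms(4) z(2) by simp
  qed
  then have "x \<le> Ginv z" using G.le_hinv assms(3) by (simp add: Ginv_eq)
  then have "y \<le> pinv (Ginv z)" using phi.le_hinv assms(1,2) by (simp add: pinv_eq)
  ultimately show ?thesis by simp
qed

end

locale bihari_inequality = bihari_scales phi eta w x0 x1
  for phi eta w :: "real \<Rightarrow> real" and x0 x1 :: real +
  fixes f g :: "real \<Rightarrow> real \<Rightarrow> real" and c alpha alpha' u :: "real \<Rightarrow> real"
  assumes f_cont: "continuous_on ({0..} \<times> {0..}) (\<lambda>(t, s). f t s)"
    and f_nonneg: "\<And>t s. t \<ge> 0 \<Longrightarrow> s \<ge> 0 \<Longrightarrow> f t s \<ge> 0"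
    and f_mono: "\<And>s. s \<ge> 0 \<Longrightarrow> mono_on {0..} (\<lambda>t. f t s)"
    and g_cont: "continuous_on ({0..} \<times> {0..}) (\<lambda>(t, s). g t s)"
    and g_nonneg: "\<And>t s. t \<ge> 0 \<Longrightarrow> s \<ge> 0 \<Longrightarrow> g t s \<ge> 0"
    and g_mono: "\<And>s. s \<ge> 0 \<Longrightarrow> mono_on {0..} (\<lambda>t. g t s)"
    and c_mono: "mono_on {0..} c"
    and x0_lt: "x0 < c 0"
    and eta_mono: "mono_on {0..} eta"
    and w_nonneg: "\<And>x. x \<ge> 0 \<Longrightarrow> w x \<ge> 0"
    and w_mono: "mono_on {0..} w"
    and alpha_deriv: "\<And>t. t \<ge> 0 \<Longrightarrow> (alpha has_real_derivative alpha' t) (at t within {0..})"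
    and alpha_nonneg: "\<And>t. t \<ge> 0 \<Longrightarrow> alpha t \<ge> 0"
    and alpha_mono: "mono_on {0..} alpha"
    and alpha_le: "\<And>t. t \<ge> 0 \<Longrightarrow> alpha t \<le> t"
    and u_cont: "continuous_on {0..} u"
    and u_nonneg: "\<And>t. t \<ge> 0 \<Longrightarrow> u t \<ge> 0"
    and u_ineq: "\<And>t. t \<ge> 0 \<Longrightarrow>
         phi (u t) \<le> c t
           + integral {0..alpha t} (\<lambda>s. f t s * eta (u s) * w (u s))
           + integral {0..t} (\<lambda>s. g t s * eta (u s) * w (u s))"
begin

definition weight :: "real \<Rightarrow> real" where
  "weight s = eta (u s) * w (u s)"

definition majorant :: "real \<Rightarrow> real \<Rightarrow> real" where
  "majorant T t = c T + integral {0..alpha t} (\<lambda>s. f T s * weight s)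
                      + integral {0..t} (\<lambda>s. g T s * weight s)"

definition forcing :: "real \<Rightarrow> real \<Rightarrow> real" where
  "forcing T t = integral {0..alpha t} (f T) + integral {0..t} (g T)"

lemma alpha_cont: "continuous_on {0..} alpha"
  unfolding continuous_on_eq_continuous_within using alpha_deriv DERIV_continuous by blast

lemma alpha_deriv_at:
  assumes "0 < t" shows "(alpha has_real_derivative alpha' t) (at t)"
proof -
  have "at t within {0..} = at t" by (rule at_within_nhd[of _ "{0<..}"]) (use assms in auto)
  then show ?thesis using alpha_deriv[of t] assms by simp
qed

lemma alpha'_nonneg: "0 < t \<Longrightarrow> 0 \<le> alpha' t"
  by (rule mono_on_imp_deriv_nonneg[OF alpha_mono alpha_deriv_at]) auto

lemma alpha_0: "alpha 0 = 0"
  using alpha_nonneg[of 0] alpha_le[of 0] by simp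

lemma weight_cont: "continuous_on {0..} weight"
proof -
  have "u ` {0..} \<subseteq> {0..}" using u_nonneg by auto
  then have "continuous_on {0..} (\<lambda>s. eta (u s))" "continuous_on {0..} (\<lambda>s. w (u s))"
    using continuous_on_compose2[OF eta_cont u_cont] continuous_on_compose2[OF w_cont u_cont] by auto
  then show ?thesis unfolding weight_def by (rule continuous_on_mult)
qed

lemma weight_nonneg: "0 \<le> s \<Longrightarrow> 0 \<le> weight s"
  by (simp add: weight_def eta_nonneg w_nonneg u_nonneg)

lemma kernels_cont:
  assumes "0 \<le> T"
  shows "continuous_on {0..} (f T)" "continuous_on {0..} (g T)"
  using continuous_on_section[OF f_cont] continuous_on_section[OF g_cont] assms by simp_all

lemma weighted_kernels_cont:
  assumes "0 \<le> T"
  shows "continuous_on {0..} (\<lambda>s. f T s * weight s)" "continuous_on {0..} (\<lambda>s. g T s * weight s)"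
  using kernels_cont[OF assms] weight_cont by (simp_all add: continuous_on_mult)

lemma integral_upto_alpha_cont:
  fixes k :: "real \<Rightarrow> real"
  assumes "continuous_on {0..} k"
  shows "continuous_on {0..} (\<lambda>t. integral {0..alpha t} k)"
  by (rule continuous_on_compose2[OF integral_from_continuous[OF assms] alpha_cont])
     (use alpha_nonneg in force)

lemma integral_upto_alpha_deriv:
  fixes k :: "real \<Rightarrow> real"
  assumes "continuous_on {0..} k" "0 < t"
  shows "((\<lambda>t. integral {0..alpha t} k) has_real_derivative k (alpha t) * alpha' t) (at t)"
  by (rule integral_from_comp_deriv[OF assms(1) open_greaterThan _ _ alpha_deriv_at])
     (use assms(2) alpha_nonneg in force)+

lemma integral_upto_deriv:
  fixes k :: "real \<Rightarrow> real"
  assumes "continuous_on {0..} k" "0 < t"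
  shows "((\<lambda>t. integral {0..t} k) has_real_derivative k t) (at t)"
proof -
  have "((\<lambda>t. integral {0..t} k) has_real_derivative k t * 1) (at t)"
    by (rule integral_from_comp_deriv[OF assms(1) open_greaterThan _ _ DERIV_ident])
       (use assms(2) in auto)
  then show ?thesis by simp
qed

lemma majorant_cont: "0 \<le> T \<Longrightarrow> continuous_on {0..} (majorant T)"
  unfolding majorant_def[abs_def]
  by (intro continuous_on_add continuous_on_const integral_upto_alpha_cont
        integral_from_continuous weighted_kernels_cont)

lemma forcing_cont: "0 \<le> T \<Longrightarrow> continuous_on {0..} (forcing T)"
  unfolding forcing_def[abs_def]
  by (intro continuous_on_add integral_upto_alpha_cont integral_from_continuous kernels_cont)

lemma majorant_deriv:
  assumes "0 \<le> T" "0 < t"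
  shows "(majorant T has_real_derivative
           f T (alpha t) * weight (alpha t) * alpha' t + g T t * weight t) (at t)"
  unfolding majorant_def[abs_def]
  using DERIV_add[OF DERIV_add[OF DERIV_const[of "c T"]
          integral_upto_alpha_deriv[OF weighted_kernels_cont(1)[OF assms(1)] assms(2)]]
          integral_upto_deriv[OF weighted_kernels_cont(2)[OF assms(1)] assms(2)]]
  by simp

lemma forcing_deriv:
  assumes "0 \<le> T" "0 < t"
  shows "(forcing T has_real_derivative f T (alpha t) * alpha' t + g T t) (at t)"
  unfolding forcing_def[abs_def]
  using DERIV_add[OF integral_upto_alpha_deriv[OF kernels_cont(1)[OF assms(1)] assms(2)]
          integral_upto_deriv[OF kernels_cont(2)[OF assms(1)] assms(2)]]
  by simp

lemma majorant_0: "majorant T 0 = c T"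
  by (simp add: majorant_def alpha_0)

lemma forcing_0: "forcing T 0 = 0"
  by (simp add: forcing_def alpha_0)

(* The majorant is nondecreasing and stays above x0, because c(T) > x0. *)
lemma majorant_mono:
  assumes "0 \<le> T" "0 \<le> s" "s \<le> t"
  shows "majorant T s \<le> majorant T t"
proof -
  have "alpha s \<le> alpha t" using assms by (intro mono_onD[OF alpha_mono]) auto
  then show ?thesis
    unfolding majorant_def
    using integral_from_mono[OF weighted_kernels_cont(1)[OF assms(1)], of "alpha s" "alpha t"]
          integral_from_mono[OF weighted_kernels_cont(2)[OF assms(1)], of s t]
          assms f_nonneg g_nonneg weight_nonneg
    by (auto intro: add_mono)
qed

lemma majorant_gt_x0: "0 \<le> T \<Longrightarrow> 0 \<le> t \<Longrightarrow> x0 < majorant T t"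
  using majorant_mono[of T 0 t] mono_onD[OF c_mono, of 0 T] x0_lt by (simp add: majorant_0)

(* The inequality for u implies phi(u s) <= majorant T s for s <= T, since f, g and c are
   nondecreasing in their first argument. *)
lemma phi_u_le_majorant:
  assumes "0 \<le> s" "s \<le> T"
  shows "phi (u s) \<le> majorant T s"
proof -
  have T: "0 \<le> T" using assms by simp
  have kernel_le: "integral {0..b} (\<lambda>r. K s r * weight r) \<le> integral {0..b} (\<lambda>r. K T r * weight r)"
    if "K = f \<or> K = g" for K :: "real \<Rightarrow> real \<Rightarrow> real" and b
  proof (rule integral_kernel_le[OF _ _ weight_cont weight_nonneg])
    show "continuous_on {0..} (K s)" "continuous_on {0..} (K T)"
      using kernels_cont assms T that by auto
    show "K s r \<le> K T r" if "0 \<le> r" for r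
      using \<open>K = f \<or> K = g\<close> mono_onD[OF f_mono] mono_onD[OF g_mono] assms that by force
  qed
  have "phi (u s) \<le> c s + integral {0..alpha s} (\<lambda>r. f s r * weight r)
                        + integral {0..s} (\<lambda>r. g s r * weight r)"
    using u_ineq[OF assms(1)] by (simp add: weight_def mult.assoc)
  also have "\<dots> \<le> majorant T s"
    unfolding majorant_def using kernel_le mono_onD[OF c_mono, of s T] assms
    by (intro add_mono) auto
  finally show ?thesis .
qed

(* Since u r <= phi^{-1}(majorant T t) for r <= t, the weight is bounded by the scale at the majorant. *)
lemma weight_le_majorant_scale:
  assumes "0 \<le> r" "r \<le> t" "t \<le> T"
  shows "weight r \<le> eta (pinv (majorant T t)) * w (pinv (majorant T t))"
proof -
  let ?p = "pinv (majorant T t)"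
  have "phi (u r) \<le> majorant T r" using phi_u_le_majorant assms by simp
  also have "\<dots> \<le> majorant T t" using majorant_mono assms by simp
  finally have "u r \<le> ?p" using phi.le_hinv u_nonneg assms(1) by (simp add: pinv_eq)
  moreover have "0 \<le> u r" using u_nonneg assms(1) .
  ultimately have "eta (u r) \<le> eta ?p" "w (u r) \<le> w ?p"
    using mono_onD[OF eta_mono] mono_onD[OF w_mono] by auto
  moreover have "0 \<le> eta ?p" "0 \<le> w (u r)"
    using eta_nonneg w_nonneg \<open>0 \<le> u r\<close> \<open>u r \<le> ?p\<close> by auto
  ultimately show ?thesis unfolding weight_def by (rule mult_mono)
qed

lemma majorant_growth:
  assumes "0 < t" "t \<le> T"
  shows "f T (alpha t) * weight (alpha t) * alpha' t + g T t * weight t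
         \<le> (f T (alpha t) * alpha' t + g T t) * (eta (pinv (majorant T t)) * w (pinv (majorant T t)))"
    (is "?lhs \<le> (?a + ?b) * ?S")
proof -
  have "0 \<le> alpha t" "alpha t \<le> t" using alpha_nonneg alpha_le assms by auto
  then have "weight (alpha t) \<le> ?S" "weight t \<le> ?S"
    using weight_le_majorant_scale assms by auto
  moreover have "0 \<le> ?a" "0 \<le> ?b"
    using f_nonneg g_nonneg alpha'_nonneg \<open>0 \<le> alpha t\<close> assms by auto
  ultimately have "?a * weight (alpha t) \<le> ?a * ?S" "?b * weight t \<le> ?b * ?S"
    by (auto intro: mult_left_mono)
  then show ?thesis by (simp add: algebra_simps)
qed

lemma PsiG_majorant_le:
  assumes "0 \<le> T"
  shows "Psi (G (majorant T T)) \<le> Psi (G (c T)) + forcing T T"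
proof -
  have "Psi (G (majorant T T)) - Psi (G (majorant T 0)) \<le> forcing T T - forcing T 0"
  proof (rule antiderivative_comparison[where K = "\<lambda>x. Psi (G x)"
        and H = "\<lambda>x. eta (pinv x) * w (pinv x)"
        and v' = "\<lambda>t. f T (alpha t) * weight (alpha t) * alpha' t + g T t * weight t"
        and F' = "\<lambda>t. f T (alpha t) * alpha' t + g T t"])
    show "continuous_on {0..T} (majorant T)" "continuous_on {0..T} (forcing T)"
      using continuous_on_subset[OF majorant_cont[OF assms]] continuous_on_subset[OF forcing_cont[OF assms]]
      by auto
    fix t
    assume "0 \<le> t" "t \<le> T"
    then show "((\<lambda>x. Psi (G x)) has_real_derivative 1 / (eta (pinv (majorant T t)) * w (pinv (majorant T t))))
                 (at (majorant T t))"
      using PsiG_deriv majorant_gt_x0 assms by simp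
  next
    fix t
    assume "0 < t" "t < T"
    then show "(majorant T has_real_derivative
                 f T (alpha t) * weight (alpha t) * alpha' t + g T t * weight t) (at t)"
      "(forcing T has_real_derivative f T (alpha t) * alpha' t + g T t) (at t)"
      "0 < eta (pinv (majorant T t)) * w (pinv (majorant T t))"
      "f T (alpha t) * weight (alpha t) * alpha' t + g T t * weight t
         \<le> (f T (alpha t) * alpha' t + g T t) * (eta (pinv (majorant T t)) * w (pinv (majorant T t)))"
      using majorant_deriv forcing_deriv majorant_growth assms
            eta_pos[OF pinv_pos[OF majorant_gt_x0]] w_pos[OF pinv_pos[OF majorant_gt_x0]]
      by auto
  qed (use assms in simp)
  then show ?thesis by (simp add: majorant_0 forcing_0)
qed

lemma bihari_estimate:
  assumes "0 \<le> T" "Psi (G (c T)) + forcing T T \<in> Psi ` {0<..}"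
  shows "u T \<le> pinv (Ginv (Psi_inv phi eta w x0 x1 (Psi (G (c T)) + forcing T T)))"
  using bound_by_inverses[OF u_nonneg phi_u_le_majorant majorant_gt_x0 PsiG_majorant_le assms(2)] assms(1)
  by simp

end

theorem theorem2:
  fixes f g :: "real \<Rightarrow> real \<Rightarrow> real"
    and phi c eta w alpha u :: "real \<Rightarrow> real"
    and x0 x1 \<tau> :: real
  assumes f_cont: "continuous_on ({0..} \<times> {0..}) (\<lambda>(t, s). f t s)"
      and f_nonneg: "\<And>t s. t \<ge> 0 \<Longrightarrow> s \<ge> 0 \<Longrightarrow> f t s \<ge> 0"
      and f_mono: "\<And>s. s \<ge> 0 \<Longrightarrow> mono_on {0..} (\<lambda>t. f t s)"
      and g_cont: "continuous_on ({0..} \<times> {0..}) (\<lambda>(t, s). g t s)"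
      and g_nonneg: "\<And>t s. t \<ge> 0 \<Longrightarrow> s \<ge> 0 \<Longrightarrow> g t s \<ge> 0"
      and g_mono: "\<And>s. s \<ge> 0 \<Longrightarrow> mono_on {0..} (\<lambda>t. g t s)"
      and phi_cont: "continuous_on {0..} phi"
      and phi_nonneg: "\<And>x. x \<ge> 0 \<Longrightarrow> phi x \<ge> 0"
      and phi_strict: "strict_mono_on {0..} phi"
      and phi_lim: "filterlim phi at_top at_top"
      and c_cont: "continuous_on {0..} c"
      and c_pos: "\<And>t. t \<ge> 0 \<Longrightarrow> c t > 0"
      and c_mono: "mono_on {0..} c"
      and eta_cont: "continuous_on {0..} eta"
      and eta_nonneg: "\<And>x. x \<ge> 0 \<Longrightarrow> eta x \<ge> 0"
      and eta_mono: "mono_on {0..} eta"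
      and eta_pos: "\<And>x. x > 0 \<Longrightarrow> eta x > 0"
      and w_cont: "continuous_on {0..} w"
      and w_nonneg: "\<And>x. x \<ge> 0 \<Longrightarrow> w x \<ge> 0"
      and w_mono: "mono_on {0..} w"
      and w_pos: "\<And>x. x > 0 \<Longrightarrow> w x > 0"
      and alpha_C1: "\<exists>alpha'. continuous_on {0..} alpha' \<and>
                       (\<forall>t\<ge>0. (alpha has_real_derivative alpha' t) (at t within {0..}))"
      and alpha_nonneg: "\<And>t. t \<ge> 0 \<Longrightarrow> alpha t \<ge> 0"
      and alpha_mono: "mono_on {0..} alpha"
      and alpha_le: "\<And>t. t \<ge> 0 \<Longrightarrow> alpha t \<le> t"
      and x0_ge: "phi 0 \<le> x0"
      and x0_lt: "x0 < c 0"
      and G_finite: "\<And>x. x \<ge> x0 \<Longrightarrow>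
                       set_integrable lborel {x0..x} (\<lambda>s. 1 / eta (phi_inv phi s))"
      and G_infinite: "filterlim (G_fun phi eta x0) at_top at_top"
      and x1_pos: "x1 > 0"
      and u_cont: "continuous_on {0..} u"
      and u_nonneg: "\<And>t. t \<ge> 0 \<Longrightarrow> u t \<ge> 0"
      and u_ineq: "\<And>t. t \<ge> 0 \<Longrightarrow>
         phi (u t) \<le> c t
           + integral {0..alpha t} (\<lambda>s. f t s * eta (u s) * w (u s))
           + integral {0..t} (\<lambda>s. g t s * eta (u s) * w (u s))"
      and tau_pos: "\<tau> > 0"
      and tau_dom: "\<And>t. t \<in> {0..\<tau>} \<Longrightarrow>
         Psi_fun phi eta w x0 x1 (G_fun phi eta x0 (c t))
           + integral {0..alpha t} (\<lambda>s. f t s) + integral {0..t} (\<lambda>s. g t s)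
         \<in> Psi_fun phi eta w x0 x1 ` {0<..}"
  shows "\<And>t. t \<in> {0..\<tau>} \<Longrightarrow>
     u t \<le> phi_inv phi (G_inv phi eta x0 (Psi_inv phi eta w x0 x1
             (Psi_fun phi eta w x0 x1 (G_fun phi eta x0 (c t))
              + integral {0..alpha t} (\<lambda>s. f t s) + integral {0..t} (\<lambda>s. g t s))))"
proof -
  obtain alpha' where alpha': "\<And>t. t \<ge> 0 \<Longrightarrow> (alpha has_real_derivative alpha' t) (at t within {0..})"
    using alpha_C1 by blast
  interpret bihari_inequality phi eta w x0 x1 f g c alpha alpha' u
    by (unfold_locales; rule assms alpha')
  fix t assume "t \<in> {0..\<tau>}"
  then show "u t \<le> phi_inv phi (G_inv phi eta x0 (Psi_inv phi eta w x0 x1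
             (Psi_fun phi eta w x0 x1 (G_fun phi eta x0 (c t))
              + integral {0..alpha t} (\<lambda>s. f t s) + integral {0..t} (\<lambda>s. g t s))))"
    using bihari_estimate[of t] tau_dom[of t] by (simp add: forcing_def add.assoc)
qed

end
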